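(* Let $P$ be a probability distribution over a finite set of at least two items $\mathcal{I}=\{1,2,\dots\}$ with $P(1)>P(2)>0$, and let $m=P(1)/P(2)$ (so $m>1$). Let $Q_1$ be a semi-distribution that agrees with $P$ on every item except item $1$, with $P(1)>Q_1(1)>0$, and let $m_1=P(1)/Q_1(1)$ (so $m_1>1$). Let $Q_2$ be a semi-distribution that agrees with $P$ on every item except item $2$, with $P(2)>Q_2(2)>0$, and let $m_2=P(2)/Q_2(2)$. Then $\mathrm{LogLoss}(Q_2\mid P)<\mathrm{LogLoss}(Q_1\mid P)$ whenever $m_2<m_1^{m}$.
   Context: A semi-distribution $Q$ on a finite item set $\mathcal{I}$ is a function $Q:\mathcal{I}\to[0,1]$ with $\sum_i Q(i)\le 1$; a probability distribution is one whose values sum to $1$. For a probability distribution $P$ and semi-distribution $Q$, $\mathrm{LogLoss}(Q\mid P):=\mathbb{E}_{o\sim P}[-\ln Q(o)]=-\sum_{i:P(i)>0}P(i)\ln Q(i)$. *)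

theory Defs
  imports Complex_Main
begin

definition semi_distribution :: "'a set \<Rightarrow> ('a \<Rightarrow> real) \<Rightarrow> bool" where
  "semi_distribution I Q \<longleftrightarrow> (\<forall>i\<in>I. 0 \<le> Q i \<and> Q i \<le> 1) \<and> (\<Sum>i\<in>I. Q i) \<le> 1"

definition prob_distribution :: "'a set \<Rightarrow> ('a \<Rightarrow> real) \<Rightarrow> bool" where
  "prob_distribution I P \<longleftrightarrow> semi_distribution I P \<and> (\<Sum>i\<in>I. P i) = 1"

definition LogLoss :: "'a set \<Rightarrow> ('a \<Rightarrow> real) \<Rightarrow> ('a \<Rightarrow> real) \<Rightarrow> real" where
  "LogLoss I Q P = - (\<Sum>i\<in>{i\<in>I. P i > 0}. P i * ln (Q i))"

end

theory Submission
  imports Defs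
begin

text \<open>Replacing \<open>P\<close> by \<open>Q\<close> at a single item \<open>j\<close> with \<open>P j > 0\<close> changes the log loss of
  \<open>P\<close> against itself by exactly \<open>P j * ln (P j / Q j)\<close>. Hence the comparison reduces to
  \<open>P i2 * ln m\<^sub>2 < P i1 * ln m\<^sub>1\<close>, which is the hypothesis \<open>m\<^sub>2 < m\<^sub>1 powr (P i1 / P i2)\<close>
  after taking logarithms.\<close>

lemma LogLoss_agree_except:
  assumes "finite I" "j \<in> I" "P j > 0" "Q j > 0"
    and agree: "\<forall>i\<in>I. i \<noteq> j \<longrightarrow> Q i = P i"
  shows "LogLoss I Q P = LogLoss I P P + P j * ln (P j / Q j)"
proof -
  define S where "S = {i\<in>I. P i > 0}"
  have "finite S" "j \<in> S" using assms by (auto simp: S_def)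
  have split_j: "LogLoss I R P = - (P j * ln (R j) + (\<Sum>i\<in>S - {j}. P i * ln (R i)))" for R
    unfolding LogLoss_def S_def[symmetric] sum.remove[OF \<open>finite S\<close> \<open>j \<in> S\<close>] by simp
  have rest: "(\<Sum>i\<in>S - {j}. P i * ln (Q i)) = (\<Sum>i\<in>S - {j}. P i * ln (P i))"
    using agree by (intro sum.cong) (auto simp: S_def)
  show ?thesis
    unfolding split_j[of Q] split_j[of P] rest using assms(3,4) by (simp add: ln_div algebra_simps)
qed

lemma less_powr_divide_iff_mult_ln_less:
  fixes x y a b :: real
  assumes "x > 0" "y > 0" "b > 0"
  shows "x < y powr (a / b) \<longleftrightarrow> b * ln x < a * ln y"
proof -
  have "x < y powr (a / b) \<longleftrightarrow> ln x < ln (y powr (a / b))"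
    using assms by (intro ln_less_cancel_iff[symmetric]) auto
  also have "\<dots> \<longleftrightarrow> ln x < (a / b) * ln y"
    by (simp only: ln_powr)
  also have "\<dots> \<longleftrightarrow> b * ln x < a * ln y"
    using assms(3) by (simp add: pos_less_divide_eq mult.commute)
  finally show ?thesis .
qed

theorem corollary1:
  fixes I :: "'a set" and P Q1 Q2 :: "'a \<Rightarrow> real" and i1 i2 :: 'a
  assumes finI: "finite I"
    and items: "i1 \<in> I" "i2 \<in> I" "i1 \<noteq> i2"
    and P: "prob_distribution I P"
    and P12: "P i1 > P i2" "P i2 > 0"
    and Q1: "semi_distribution I Q1"
    and Q1_agree: "\<forall>i\<in>I. i \<noteq> i1 \<longrightarrow> Q1 i = P i"
    and Q1_1: "P i1 > Q1 i1" "Q1 i1 > 0"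
    and Q2: "semi_distribution I Q2"
    and Q2_agree: "\<forall>i\<in>I. i \<noteq> i2 \<longrightarrow> Q2 i = P i"
    and Q2_2: "P i2 > Q2 i2" "Q2 i2 > 0"
    and cond: "P i2 / Q2 i2 < (P i1 / Q1 i1) powr (P i1 / P i2)"
  shows "LogLoss I Q2 P < LogLoss I Q1 P"
proof -
  have "P i1 > 0" using P12 by linarith
  have m1: "P i1 / Q1 i1 > 0" and m2: "P i2 / Q2 i2 > 0"
    using \<open>P i1 > 0\<close> P12(2) Q1_1(2) Q2_2(2) by simp_all
  have "P i2 * ln (P i2 / Q2 i2) < P i1 * ln (P i1 / Q1 i1)"
    using cond less_powr_divide_iff_mult_ln_less[OF m2 m1 P12(2)] by blast
  then show ?thesis
    using LogLoss_agree_except[OF finI items(1) \<open>P i1 > 0\<close> Q1_1(2) Q1_agree]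
      LogLoss_agree_except[OF finI items(2) P12(2) Q2_2(2) Q2_agree]
    by linarith
qed

end
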